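(* Let $T$ be a rooted tree (of arbitrary degree) stored in light-first order with respect to some space-filling curve, and let $\hat T$ be the virtual tree obtained from $T$ by the transformation described in the context. If every vertex of $\hat T$ is stored in the same processor as in $T$, then $\hat T$ is also stored in light-first order.
   Context: Processors sit on the cells of a 2D grid enumerated by a space-filling curve; vertex $v$ is stored at position $p_v$. For a rooted tree (real or virtual), $s(v)$ is the size of the subtree rooted at $v$; the tree is stored in light-first order if for every vertex $v$, its children can be indexed $u_1,\dots,u_m$ with $s(u_1)\le\dots\le s(u_m)$ so that $u_i$ is stored at position $p_v+1+\sum_{j<i}s(u_j)$. Virtual tree: every vertex $v$ carries an ordered list $C(v)$ of current children, initially the children of $v$ in $T$ listed in light-first order (nondecreasing subtree size, i.e. increasing position), and an ordered list $A(v)$ of appended children, initially empty. The children of $v$ in the virtual tree are the elements of $C(v)$ followed by those of $A(v)$. $\textsc{Transform}(v)$, for $C(v)=(c_1,\dots,c_d)$ and $A(v)=(a_1,\dots,a_{d'})$: (1) set $A(c_1):=(c_2,\dots,c_{\lfloor d/2\rfloor})$ and $A(c_{\lfloor d/2\rfloor+1}):=(c_{\lfloor d/2\rfloor+2},\dots,c_d)$, and set $C(v):=(c_1,c_{\lfloor d/2\rfloor+1})$; (2) set $A(a_1):=(a_2,\dots,a_{\lfloor d'/2\rfloor})$ and $A(a_{\lfloor d'/2\rfloor+1}):=(a_{\lfloor d'/2\rfloor+2},\dots,a_{d'})$, and set $A(v):=(a_1,a_{\lfloor d'/2\rfloor+1})$; (3) apply $\textsc{Transform}$ to $c_1$, $c_{\lfloor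 d/2\rfloor+1}$, $a_1$ and $a_{\lfloor d'/2\rfloor+1}$. (Index ranges with upper end below lower end are empty, repeated entries are listed once, and nonexistent elements are ignored.) $\hat T$ starts equal to $T$ and is transformed by applying $\textsc{Transform}$ starting from the root; the result is a virtual tree in which each vertex has at most 4 children. *)

theory Defs
  imports Main "HOL-Library.Multiset"
begin

datatype 'v rtree = Node 'v "'v rtree list"

fun root :: "'v rtree \<Rightarrow> 'v" where
  "root (Node v ts) = v"

fun tsize :: "'v rtree \<Rightarrow> nat" where
  "tsize (Node v ts) = 1 + sum_list (map tsize ts)"

fun vertices :: "'v rtree \<Rightarrow> 'v list" where
  "vertices (Node v ts) = v # concat (map vertices ts)"

fun subtrees :: "'v rtree \<Rightarrow> 'v rtree list" where
  "subtrees (Node v ts) = Node v ts # concat (map subtrees ts)"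

definition light_first :: "('v \<Rightarrow> nat) \<Rightarrow> 'v rtree \<Rightarrow> bool" where
  "light_first p t \<longleftrightarrow>
     (\<forall>v ts. Node v ts \<in> set (subtrees t) \<longrightarrow>
        (\<exists>us. mset us = mset ts \<and> sorted (map tsize us) \<and>
           (\<forall>i < length us. p (root (us ! i)) = p v + 1 + sum_list (map tsize (take i us)))))"

text \<open>Virtual trees: vertex v with current children C(v) and appended children A(v).\<close>
datatype 'v vtree = VNode 'v "'v vtree list" "'v vtree list"

fun vroot :: "'v vtree \<Rightarrow> 'v" where
  "vroot (VNode v cs as) = v"

fun vsize :: "'v vtree \<Rightarrow> nat" where
  "vsize (VNode v cs as) = 1 + sum_list (map vsize cs) + sum_list (map vsize as)"

fun setA :: "'v vtree \<Rightarrow> 'v vtree list \<Rightarrow> 'v vtree" where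
  "setA (VNode v cs as) as' = VNode v cs as'"

text \<open>One halving step on a list (c_1,...,c_d): set A(c_1) := (c_2..c_{d div 2}),
  A(c_{d div 2 + 1}) := (c_{d div 2 + 2} .. c_d), and keep (c_1, c_{d div 2 + 1})
  (listed once if equal, omitted if nonexistent).\<close>
definition halve :: "'v vtree list \<Rightarrow> 'v vtree list" where
  "halve cs = (let d = length cs; h = d div 2 in
     if d = 0 then []
     else if d = 1 then [setA (cs ! 0) []]
     else [setA (cs ! 0) (take (h - 1) (drop 1 cs)), setA (cs ! h) (drop (Suc h) cs)])"

lemma sum_take_le: "sum_list (map (f::'a \<Rightarrow> nat) (take k xs)) \<le> sum_list (map f xs)"
proof -
  have "sum_list (map f xs) = sum_list (map f (take k xs)) + sum_list (map f (drop k xs))"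
    by (metis append_take_drop_id map_append sum_list_append)
  then show ?thesis by simp
qed

lemma sum_drop_le: "sum_list (map (f::'a \<Rightarrow> nat) (drop k xs)) \<le> sum_list (map f xs)"
proof -
  have "sum_list (map f xs) = sum_list (map f (take k xs)) + sum_list (map f (drop k xs))"
    by (metis append_take_drop_id map_append sum_list_append)
  then show ?thesis by simp
qed

lemma vsize_setA: "vsize (setA t L) \<le> vsize t + sum_list (map vsize L)"
  by (cases t) simp

lemma halve_size:
  assumes "x \<in> set (halve cs)"
  shows "vsize x \<le> sum_list (map vsize cs)"
proof -
  consider "length cs = 1" | "length cs \<ge> 2" | "length cs = 0" by linarith
  then show ?thesis
  proof cases
    case 1
    then obtain c where cs: "cs = [c]" by (metis One_nat_def length_0_conv length_Suc_conv)
    then have "x = setA c []" using assms by (simp add: halve_def)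
    then show ?thesis using vsize_setA[of c "[]"] cs by simp
  next
    case 3 then show ?thesis using assms by (simp add: halve_def)
  next
    case 2
    define h where "h = length cs div 2"
    have hl: "h < length cs" "h \<ge> 1" using 2 by (auto simp: h_def)
    obtain c rest where cs: "cs = c # rest" using 2 by (cases cs) auto
    have hv: "halve cs = [setA (cs!0) (take (h-1) (drop 1 cs)), setA (cs!h) (drop (Suc h) cs)]"
      using 2 unfolding halve_def h_def Let_def by auto
    have x: "x = setA c (take (h - 1) rest) \<or> x = setA (cs ! h) (drop (Suc h) cs)"
      using assms hv cs by auto
    have d: "drop h cs = cs ! h # drop (Suc h) cs" using hl by (simp add: Cons_nth_drop_Suc)
    show ?thesis
    proof (rule disjE[OF x])
      assume "x = setA c (take (h - 1) rest)"
      then show ?thesis using vsize_setA[of c "take (h-1) rest"] sum_take_le[of vsize "h-1" rest] cs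
        by simp
    next
      assume "x = setA (cs ! h) (drop (Suc h) cs)"
      moreover have "vsize (cs ! h) + sum_list (map vsize (drop (Suc h) cs)) \<le> sum_list (map vsize cs)"
        using sum_drop_le[of vsize h cs] d by simp
      ultimately show ?thesis using vsize_setA[of "cs ! h" "drop (Suc h) cs"] by (metis order_trans)
    qed
  qed
qed

function transform :: "'v vtree \<Rightarrow> 'v vtree" where
  "transform (VNode v cs as) = VNode v (map transform (halve cs)) (map transform (halve as))"
  by pat_completeness auto
termination
proof (relation "measure vsize")
  show "wf (measure vsize)" by simp
next
  fix v cs as x
  assume "x \<in> set (halve cs)"
  then show "(x, VNode v cs as) \<in> measure vsize" using halve_size[of x cs] by simp
next
  fix v cs as x
  assume "x \<in> set (halve as)"
  then show "(x, VNode v cs as) \<in> measure vsize" using halve_size[of x as] by simp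
qed

text \<open>Initial virtual tree: C(v) = children of v in T in increasing position
  (= light-first order), A(v) empty.\<close>
fun init_vtree :: "('v \<Rightarrow> nat) \<Rightarrow> 'v rtree \<Rightarrow> 'v vtree" where
  "init_vtree p (Node v ts) = VNode v (sort_key (\<lambda>t. p (vroot t)) (map (init_vtree p) ts)) []"

fun to_rtree :: "'v vtree \<Rightarrow> 'v rtree" where
  "to_rtree (VNode v cs as) = Node v (map to_rtree cs @ map to_rtree as)"

definition virtual_tree :: "('v \<Rightarrow> nat) \<Rightarrow> 'v rtree \<Rightarrow> 'v rtree" where
  "virtual_tree p T = to_rtree (transform (init_vtree p T))"

end

theory Submission
  imports Defs
begin

(* Transform at a vertex v splits its children c_1, ..., c_d, sorted by size and stored
   consecutively after v, into the light half c_1, ..., c_{d/2} and the heavy half.  Each half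
   collapses into its first vertex, which keeps its own children and receives the rest of the
   half as appended children.  That vertex is stored exactly where its half begins, its new
   subtree occupies exactly the cells of the half, and the light half weighs at most the heavy
   one; so the new children of v are again stored in light-first order.  The appended children
   of v come after all current ones, and each of their halves weighs at least as much as all
   current children together, so the order also survives concatenation.  The invariant ready
   records these facts at every vertex Transform is applied to: it holds at the root because T
   is light-first, and it is passed on to the new children. *)

lemma vroot_init_vtree [simp]: "vroot (init_vtree p t) = root t"
  by (cases t) simp

lemma sum_list_map_sort_key [simp]:
  "sum_list (map (f :: 'a \<Rightarrow> nat) (sort_key g xs)) = sum_list (map f xs)"
  by (metis mset_map mset_sort sum_mset_sum_list)

lemma vsize_init_vtree [simp]: "vsize (init_vtree p t) = tsize t"
  by (induction t) (simp_all add: comp_def cong: map_cong)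

lemma root_to_rtree [simp]: "root (to_rtree x) = vroot x"
  by (cases x) simp

lemma tsize_to_rtree [simp]: "tsize (to_rtree x) = vsize x"
  by (induction x) (simp_all add: comp_def cong: map_cong)

lemma vroot_transform [simp]: "vroot (transform x) = vroot x"
  by (cases x) simp

lemma vroot_setA [simp]: "vroot (setA x X) = vroot x"
  by (cases x) simp

lemma tsize_pos: "0 < tsize t"
  by (cases t) simp

fun stored_from :: "('v \<Rightarrow> nat) \<Rightarrow> nat \<Rightarrow> 'v rtree list \<Rightarrow> bool" where
  "stored_from p b [] \<longleftrightarrow> True"
| "stored_from p b (t # ts) \<longleftrightarrow> p (root t) = b \<and> stored_from p (b + tsize t) ts"

lemma stored_from_append [simp]:
  "stored_from p b (ts @ us) \<longleftrightarrow>
     stored_from p b ts \<and> stored_from p (b + sum_list (map tsize ts)) us"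
  by (induction ts arbitrary: b) (auto simp: add.assoc)

lemma stored_from_iff_nth:
  "stored_from p b ts \<longleftrightarrow>
     (\<forall>i < length ts. p (root (ts ! i)) = b + sum_list (map tsize (take i ts)))"
  by (induction ts arbitrary: b) (auto simp: All_less_Suc2 add.assoc)

lemma stored_from_map_cong:
  assumes "\<forall>x\<in>set xs. root (f x) = root (g x) \<and> tsize (f x) = tsize (g x)"
  shows "stored_from p b (map f xs) \<longleftrightarrow> stored_from p b (map g xs)"
  using assms by (induction xs arbitrary: b) auto

lemma stored_from_root_ge: "stored_from p b ts \<Longrightarrow> t \<in> set ts \<Longrightarrow> b \<le> p (root t)"
  by (induction ts arbitrary: b) fastforce+

lemma stored_from_strict_sorted:
  "stored_from p b ts \<Longrightarrow> sorted_wrt (<) (map (\<lambda>t. p (root t)) ts)"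
proof (induction ts arbitrary: b)
  case (Cons t ts)
  then have t: "p (root t) = b" and ts: "stored_from p (b + tsize t) ts" by simp_all
  have "p (root t) < p (root u)" if "u \<in> set ts" for u
    using stored_from_root_ge[OF ts that] tsize_pos[of t] t by linarith
  then show ?case using Cons.IH[OF ts] by simp
qed simp

lemma light_first_iff_subtrees:
  "light_first p t \<longleftrightarrow> (\<forall>s\<in>set (subtrees t). case s of Node v ts \<Rightarrow>
     \<exists>us. mset us = mset ts \<and> sorted (map tsize us) \<and> stored_from p (p v + 1) us)"
  unfolding light_first_def stored_from_iff_nth
  by (intro iffI ballI allI impI) (auto split: rtree.split)

lemma light_first_Node:
  "light_first p (Node v ts) \<longleftrightarrow>
     (\<exists>us. mset us = mset ts \<and> sorted (map tsize us) \<and> stored_from p (p v + 1) us) \<and>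
     (\<forall>t\<in>set ts. light_first p t)"
  unfolding light_first_iff_subtrees[of p] by simp

definition untouched :: "('v \<Rightarrow> nat) \<Rightarrow> 'v vtree \<Rightarrow> bool" where
  "untouched p y \<longleftrightarrow> (\<exists>t. light_first p t \<and> y = init_vtree p t)"

fun ready :: "('v \<Rightarrow> nat) \<Rightarrow> 'v vtree \<Rightarrow> bool" where
  "ready p (VNode v cs as) \<longleftrightarrow>
     sorted (map vsize (cs @ as)) \<and> stored_from p (p v + 1) (map to_rtree (cs @ as)) \<and>
     (\<forall>y\<in>set (cs @ as). untouched p y) \<and>
     (as \<noteq> [] \<longrightarrow> sum_list (map vsize cs) \<le> vsize (hd as))"

lemma ready_init_vtree:
  assumes "light_first p t"
  shows "ready p (init_vtree p t)"
proof (cases t)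
  case (Node a ts)
  from assms obtain us where us: "mset us = mset ts" "sorted (map tsize us)"
      "stored_from p (p a + 1) us"
    and below: "\<forall>t\<in>set ts. light_first p t"
    unfolding Node light_first_Node by blast
  define ys where "ys = map (init_vtree p) us"
  have stored: "stored_from p (p a + 1) (map to_rtree ys)"
    using us(3) stored_from_map_cong[of us "to_rtree \<circ> init_vtree p" "\<lambda>t. t"]
    by (simp add: ys_def)
  have "sorted_wrt (<) (map (\<lambda>y. p (vroot y)) ys)"
    using stored_from_strict_sorted[OF us(3)] by (simp add: ys_def comp_def)
  moreover have perm: "mset (map (init_vtree p) ts) = mset ys"
    by (simp add: ys_def us(1))
  ultimately have sort: "sort_key (\<lambda>y. p (vroot y)) (map (init_vtree p) ts) = ys"
    by (intro sort_key_inj_key_eq)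
      (simp_all add: strict_sorted_iff distinct_map flip: mset_eq_setD[OF perm, simplified])
  have "\<forall>y\<in>set ys. untouched p y"
    using below us(1) by (auto simp: ys_def untouched_def dest: mset_eq_setD)
  then show ?thesis
    using stored us(2) by (simp add: Node sort ys_def comp_def)
qed

lemma untouchedE:
  assumes "untouched p c"
  obtains a cs where "c = VNode a cs []" and "ready p c"
  using assms ready_init_vtree unfolding untouched_def by (metis init_vtree.simps rtree.exhaust)

definition attach_tail :: "'v vtree list \<Rightarrow> 'v vtree" where
  "attach_tail B = setA (hd B) (tl B)"

lemma vroot_attach_tail [simp]: "vroot (attach_tail B) = vroot (hd B)"
  by (simp add: attach_tail_def)

lemma vsize_attach_tail:
  "untouched p c \<Longrightarrow> vsize (attach_tail (c # X)) = vsize c + sum_list (map vsize X)"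
  by (erule untouchedE) (simp add: attach_tail_def)

lemma ready_attach_tail:
  assumes sorted: "sorted (map vsize (c # X))"
    and stored: "stored_from p b (map to_rtree (c # X))"
    and untouched: "\<forall>y\<in>set (c # X). untouched p y"
  shows "ready p (attach_tail (c # X))"
proof -
  from untouched have "untouched p c" by simp
  then obtain a cs where c: "c = VNode a cs []" and "ready p c"
    by (rule untouchedE)
  then have cs: "sorted (map vsize cs)" "stored_from p (p a + 1) (map to_rtree cs)"
      "\<forall>y\<in>set cs. untouched p y"
    by simp_all
  have X: "stored_from p (p a + 1 + sum_list (map vsize cs)) (map to_rtree X)"
    using stored by (simp add: c comp_def add.assoc)
  have light: "vsize y < vsize c" if "y \<in> set cs" for y
    using member_le_sum_list[of "vsize y" "map vsize cs"] that by (simp add: c)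
  have heavy: "vsize c \<le> vsize x" if "x \<in> set X" for x
    using sorted that by simp
  have "sorted (map vsize (cs @ X))"
    using cs(1) sorted light heavy by (fastforce simp: sorted_append intro: less_imp_le order_trans)
  moreover have "X \<noteq> [] \<longrightarrow> sum_list (map vsize cs) \<le> vsize (hd X)"
    using heavy[OF hd_in_set] by (auto simp: c)
  ultimately show ?thesis
    using cs X untouched by (auto simp: attach_tail_def c comp_def)
qed

lemma sum_list_take_half_le:
  fixes w :: "'a \<Rightarrow> nat"
  assumes "sorted (map w L)" and "2 * h \<le> length L"
  shows "sum_list (map w (take h L)) \<le> sum_list (map w (drop h L))"
proof -
  have hl: "h \<le> length L" "h \<le> length L - h" using assms(2) by auto
  have "sum_list (map w (take h L)) = (\<Sum>i<h. w (L ! i))"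
    using hl by (simp add: sum_list_sum_nth lessThan_atLeast0 min_absorb1)
  also have "\<dots> \<le> (\<Sum>i<h. w (L ! (h + i)))"
    using assms hl by (intro sum_mono) (auto simp: sorted_iff_nth_mono)
  also have "\<dots> = sum_list (map w (take h (drop h L)))"
    using hl by (simp add: sum_list_sum_nth lessThan_atLeast0 min_absorb1 add.commute)
  also have "\<dots> \<le> sum_list (map w (drop h L))"
    by (rule sum_take_le)
  finally show ?thesis .
qed

definition halves :: "'a list \<Rightarrow> 'a list list" where
  "halves L = filter (\<lambda>B. B \<noteq> []) [take (length L div 2) L, drop (length L div 2) L]"

lemma concat_halves [simp]: "concat (halves L) = L"
  by (auto simp: halves_def)

lemma halves_nonempty: "B \<in> set (halves L) \<Longrightarrow> B \<noteq> []"
  by (auto simp: halves_def split: if_splits)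

lemma halves_infix:
  assumes "B \<in> set (halves L)"
  shows "\<exists>xs ys. L = xs @ B @ ys"
proof -
  have "B = take (length L div 2) L \<or> B = drop (length L div 2) L"
    using assms by (auto simp: halves_def split: if_splits)
  then show ?thesis by (metis append_take_drop_id append_Nil append_Nil2)
qed

lemma sorted_sums_halves:
  fixes w :: "'a \<Rightarrow> nat"
  shows "sorted (map w L) \<Longrightarrow> sorted (map (\<lambda>B. sum_list (map w B)) (halves L))"
  using sum_list_take_half_le[of w L "length L div 2"] by (simp add: halves_def)

lemma halve_eq_map_attach_tail: "halve L = map attach_tail (halves L)"
proof -
  consider "length L = 0" | "length L = 1" | "2 \<le> length L" by linarith
  then show ?thesis
  proof cases
    case 2
    then obtain c where "L = [c]" by (metis One_nat_def length_0_conv length_Suc_conv)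
    then show ?thesis by (simp add: halve_def halves_def attach_tail_def)
  next
    case 3
    then have "0 < length L div 2" "length L div 2 < length L" by auto
    with 3 show ?thesis
      by (simp add: halve_def halves_def attach_tail_def Let_def hd_conv_nth hd_drop_conv_nth
          tl_take tl_drop drop_Suc)
  qed (simp add: halve_def halves_def)
qed

lemma stored_from_map_attach_tail:
  assumes "\<forall>B\<in>set Bs. B \<noteq> [] \<and> vsize (attach_tail B) = sum_list (map vsize B)"
    and "stored_from p b (map to_rtree (concat Bs))"
  shows "stored_from p b (map to_rtree (map attach_tail Bs))"
  using assms
proof (induction Bs arbitrary: b)
  case (Cons B Bs)
  then obtain c X where "B = c # X" by (cases B) auto
  with Cons show ?case by (simp add: comp_def add.assoc)
qed simp

context
  fixes p :: "'v \<Rightarrow> nat" and b :: nat and L :: "'v vtree list"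
  assumes sorted: "sorted (map vsize L)"
    and stored: "stored_from p b (map to_rtree L)"
    and untouched: "\<forall>y\<in>set L. untouched p y"
begin

lemma halvesE:
  assumes "B \<in> set (halves L)"
  obtains c X b' where "B = c # X" and "c \<in> set L" and "sorted (map vsize (c # X))"
    and "stored_from p b' (map to_rtree (c # X))" and "\<forall>y\<in>set (c # X). untouched p y"
proof -
  obtain xs ys where L: "L = xs @ B @ ys" using halves_infix[OF assms] by blast
  obtain c X where "B = c # X" using halves_nonempty[OF assms] by (meson list.exhaust)
  moreover have "sorted (map vsize B)" using sorted by (simp add: L sorted_append)
  moreover have "stored_from p (b + sum_list (map vsize xs)) (map to_rtree B)"
    using stored by (simp add: L comp_def)
  moreover have "\<forall>y\<in>set B. untouched p y" using untouched by (simp add: L)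
  moreover have "set B \<subseteq> set L" by (auto simp: L)
  ultimately show ?thesis using that by auto
qed

lemma map_vsize_halve: "map vsize (halve L) = map (\<lambda>B. sum_list (map vsize B)) (halves L)"
  unfolding halve_eq_map_attach_tail
  by (auto elim!: halvesE simp: vsize_attach_tail)

lemma ready_halve: "y \<in> set (halve L) \<Longrightarrow> ready p y"
  unfolding halve_eq_map_attach_tail by (auto elim!: halvesE intro: ready_attach_tail)

lemma sorted_halve: "sorted (map vsize (halve L))"
  unfolding map_vsize_halve using sorted by (rule sorted_sums_halves)

lemma sum_list_halve: "sum_list (map vsize (halve L)) = sum_list (map vsize L)"
proof -
  have "sum_list (map vsize (concat Bs)) = sum_list (map (\<lambda>B. sum_list (map vsize B)) Bs)" for Bs
    by (induction Bs) simp_all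
  from this[of "halves L"] show ?thesis by (simp add: map_vsize_halve)
qed

lemma stored_from_halve: "stored_from p b (map to_rtree (halve L))"
  unfolding halve_eq_map_attach_tail
  by (rule stored_from_map_attach_tail) (auto elim!: halvesE simp: vsize_attach_tail stored)

lemma hd_le_vsize_halve: "y \<in> set (halve L) \<Longrightarrow> vsize (hd L) \<le> vsize y"
proof -
  assume "y \<in> set (halve L)"
  then obtain B where "B \<in> set (halves L)" and y: "y = attach_tail B"
    unfolding halve_eq_map_attach_tail by auto
  then obtain c X where B: "B = c # X" and "c \<in> set L" and "untouched p c"
    by (elim halvesE) auto
  then obtain d L' where L: "L = d # L'" and "vsize d \<le> vsize c"
    using sorted by (cases L) auto
  then show ?thesis using \<open>untouched p c\<close> by (simp add: y B vsize_attach_tail)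
qed

end

lemma halve_children:
  assumes "ready p (VNode v cs as)"
  defines "H \<equiv> halve cs @ halve as"
  shows "\<forall>y\<in>set H. ready p y" and "sorted (map vsize H)"
    and "stored_from p (p v + 1) (map to_rtree H)"
    and "sum_list (map vsize H) = sum_list (map vsize (cs @ as))"
proof -
  from assms have cs: "sorted (map vsize cs)" "stored_from p (p v + 1) (map to_rtree cs)"
      "\<forall>y\<in>set cs. untouched p y"
    and as: "sorted (map vsize as)"
      "stored_from p (p v + 1 + sum_list (map vsize cs)) (map to_rtree as)"
      "\<forall>y\<in>set as. untouched p y"
    and heavy: "as \<noteq> [] \<longrightarrow> sum_list (map vsize cs) \<le> vsize (hd as)"
    by (simp_all add: sorted_append comp_def)
  show "\<forall>y\<in>set H. ready p y"
    using ready_halve[OF cs] ready_halve[OF as] by (auto simp: H_def)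
  have "vsize x \<le> vsize y" if x: "x \<in> set (halve cs)" and y: "y \<in> set (halve as)" for x y
  proof -
    have "as \<noteq> []" using y by (auto simp: halve_def)
    have "vsize x \<le> sum_list (map vsize (halve cs))"
      using x by (simp add: member_le_sum_list)
    also have "\<dots> \<le> vsize (hd as)" using heavy \<open>as \<noteq> []\<close> by (simp add: sum_list_halve[OF cs])
    also have "\<dots> \<le> vsize y" using hd_le_vsize_halve[OF as y] .
    finally show ?thesis .
  qed
  then show "sorted (map vsize H)"
    using sorted_halve[OF cs] sorted_halve[OF as] by (auto simp: H_def sorted_append)
  show "stored_from p (p v + 1) (map to_rtree H)"
    using stored_from_halve[OF cs] stored_from_halve[OF as] sum_list_halve[OF cs]
    by (simp add: H_def comp_def)
  show "sum_list (map vsize H) = sum_list (map vsize (cs @ as))"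
    using sum_list_halve[OF cs] sum_list_halve[OF as] by (simp add: H_def)
qed

lemma ready_transform:
  "ready p x \<Longrightarrow> light_first p (to_rtree (transform x)) \<and> vsize (transform x) = vsize x"
proof (induction x rule: transform.induct)
  case (1 v cs as)
  define H where "H = halve cs @ halve as"
  note H = halve_children[OF "1.prems", folded H_def]
  have IH: "light_first p (to_rtree (transform y)) \<and> vsize (transform y) = vsize y"
    if "y \<in> set H" for y
    using that "1.IH" H(1) by (auto simp: H_def)
  then have sizes: "map (\<lambda>y. vsize (transform y)) H = map vsize H"
    by simp
  have "light_first p (Node v (map (to_rtree \<circ> transform) H))"
    unfolding light_first_Node
  proof (intro conjI exI)
    show "sorted (map tsize (map (to_rtree \<circ> transform) H))"
      using H(2) by (simp add: comp_def sizes)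
    show "stored_from p (p v + 1) (map (to_rtree \<circ> transform) H)"
      using H(3) stored_from_map_cong[of H "to_rtree \<circ> transform" to_rtree] IH by simp
  qed (use IH in auto)
  moreover have "vsize (transform (VNode v cs as)) = vsize (VNode v cs as)"
  proof -
    have "vsize (transform (VNode v cs as)) = 1 + sum_list (map (\<lambda>y. vsize (transform y)) H)"
      by (simp add: H_def comp_def)
    also have "\<dots> = 1 + sum_list (map vsize (cs @ as))"
      by (simp only: sizes H(4))
    finally show ?thesis by simp
  qed
  ultimately show ?case by (simp add: H_def)
qed

theorem mainTheorem5:
  fixes T :: "'v rtree" and p :: "'v \<Rightarrow> nat"
  assumes "distinct (vertices T)"
    and "light_first p T"
  shows "light_first p (virtual_tree p T)"
  using ready_transform[OF ready_init_vtree[OF assms(2)]] by (simp add: virtual_tree_def)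

end
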